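(* Let $\alpha>-1$ and $\beta>0$. Let $\Phi:[0,\infty)\to\mathbb{R}$ be twice differentiable with $\Phi,\Phi',\Phi''$ bounded and continuous on $[0,\infty)$. Then for every $x\in[0,\infty)$, $$\lim_{\eta\to\infty}\eta\left[\mathcal{R}_{\eta}^{(\alpha,\beta)}(\Phi;x)-\Phi(x)\right]=(1+\alpha)\Phi'(x)+\frac{x(3\beta+1)}{2\beta}\Phi''(x).$$
   Context: The generalized Laguerre polynomials are $\mathcal{L}_k^{(\alpha)}(t)=\sum_{i=0}^{k}\frac{(-1)^i}{i!}\binom{k+\alpha}{k-i}t^i$. Put $p_{\eta,k}(x)=e^{-\eta x/2}2^{-\alpha-1}2^{-k}\mathcal{L}_k^{(\alpha)}(-\eta x/2)$ and, for $k\ge1$, $z>0$, $\mathcal{I}_{k,\eta}^{\beta}(z)=\frac{\eta\beta e^{-\eta\beta z}(\eta\beta z)^{k\beta-1}}{\Gamma(k\beta)}$. The operator is $\mathcal{R}_{\eta}^{(\alpha,\beta)}(\Phi;x)=p_{\eta,0}(x)\Phi(0)+\sum_{k=1}^{\infty}p_{\eta,k}(x)\int_0^\infty\mathcal{I}_{k,\eta}^{\beta}(z)\Phi(z)\,dz$, $\eta>0$. *)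

theory Defs
  imports "HOL-Analysis.Analysis"
begin

definition laguerre :: "real \<Rightarrow> nat \<Rightarrow> real \<Rightarrow> real" where
  "laguerre \<alpha> k t = (\<Sum>i=0..k. (-1)^i / fact i * ((real k + \<alpha>) gchoose (k - i)) * t ^ i)"

definition p_basis :: "real \<Rightarrow> real \<Rightarrow> nat \<Rightarrow> real \<Rightarrow> real" where
  "p_basis \<alpha> \<eta> k x = exp (- \<eta> * x / 2) * 2 powr (- \<alpha> - 1) * 2 powr (- real k)
      * laguerre \<alpha> k (- \<eta> * x / 2)"

definition I_kernel :: "real \<Rightarrow> real \<Rightarrow> nat \<Rightarrow> real \<Rightarrow> real" where
  "I_kernel \<beta> \<eta> k z = \<eta> * \<beta> * exp (- \<eta> * \<beta> * z) * (\<eta> * \<beta> * z) powr (real k * \<beta> - 1)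
      / Gamma (real k * \<beta>)"

definition R_op :: "real \<Rightarrow> real \<Rightarrow> real \<Rightarrow> (real \<Rightarrow> real) \<Rightarrow> real \<Rightarrow> real" where
  "R_op \<alpha> \<beta> \<eta> \<Phi> x = p_basis \<alpha> \<eta> 0 x * \<Phi> 0
     + (\<Sum>k. p_basis \<alpha> \<eta> (Suc k) x *
          (LBINT z:{0<..}. I_kernel \<beta> \<eta> (Suc k) z * \<Phi> z))"

end

theory Submission
  imports Defs
begin

text \<open>For fixed \<open>x\<close> the operator is a positive linear functional
  \<open>R \<Phi> x = \<Sum>\<^sub>k p\<^sub>k(x) G\<^sub>k(\<Phi>)\<close>: \<open>G\<^sub>0\<close> evaluates at \<open>0\<close>, and for \<open>k > 0\<close> \<open>G\<^sub>k\<close> integrates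
  against the Gamma density of shape \<open>k\<beta>\<close> and rate \<open>\<eta>\<beta>\<close>, whose moments are
  \<open>(k\<beta>)\<^sup>(\<^sup>i\<^sup>) / (\<eta>\<beta>)\<^sup>i\<close>. The weights \<open>p\<^sub>k(x)\<close> are nonnegative and sum to \<open>1\<close> (Laguerre
  generating function at \<open>1/2\<close>), and a Laguerre recurrence gives their factorial moments
  by recursion in \<open>\<alpha>\<close>. This yields the central moments \<open>M\<^sub>j = R((\<cdot> - x)\<^sup>j; x)\<close> in closed
  form: \<open>\<eta> M\<^sub>1 = 1 + \<alpha>\<close>, \<open>\<eta> M\<^sub>2 \<rightarrow> x (3\<beta> + 1) / \<beta>\<close>, \<open>\<eta> M\<^sub>4 \<rightarrow> 0\<close>. The remainder of the
  second-order Taylor expansion of \<open>\<Phi>\<close> at \<open>x\<close> is at most \<open>\<epsilon> (z - x)\<^sup>2 + K\<^sub>\<epsilon> (z - x)\<^sup>4\<close>,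
  so by positivity it contributes \<open>o(1/\<eta>)\<close>.\<close>

definition laguerre_neg :: "real \<Rightarrow> nat \<Rightarrow> real \<Rightarrow> real" where
  "laguerre_neg \<alpha> k s = (\<Sum>i=0..k. s^i / fact i * ((real k + \<alpha>) gchoose (k - i)))"

lemma laguerre_minus: "laguerre \<alpha> k (-s) = laguerre_neg \<alpha> k s"
  unfolding laguerre_def laguerre_neg_def
proof (rule sum.cong[OF refl])
  fix i
  have "(-1::real)^i * (-s)^i = s^i"
    by (simp flip: power_mult_distrib)
  then show "(-1)^i / fact i * ((real k + \<alpha>) gchoose (k - i)) * (-s)^i
      = s^i / fact i * ((real k + \<alpha>) gchoose (k - i))"
    by (metis mult.commute mult.left_commute times_divide_eq_left)
qed

lemma gbinomial_nonneg_shifted: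
  assumes "\<alpha> > -1" "i \<le> k"
  shows "((real k + \<alpha>) gchoose (k - i)) \<ge> 0"
proof -
  have "(real k + \<alpha>) - real (k - i) + 1 = \<alpha> + real i + 1"
    using assms by simp
  moreover have "\<alpha> + real i + 1 > 0" using assms by simp
  ultimately show ?thesis unfolding gbinomial_pochhammer'
    by (intro divide_nonneg_pos) (auto intro!: less_imp_le[OF pochhammer_pos])
qed

lemma laguerre_neg_nonneg: "\<alpha> > -1 \<Longrightarrow> s \<ge> 0 \<Longrightarrow> laguerre_neg \<alpha> k s \<ge> 0"
  unfolding laguerre_neg_def
  by (intro sum_nonneg mult_nonneg_nonneg divide_nonneg_pos gbinomial_nonneg_shifted) auto

lemma gbinomial_Suc_shift_split:
  assumes "i \<le> n"
  shows "real (Suc n) * ((real (Suc n) + \<alpha>) gchoose (Suc n - i)) =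
     (\<alpha> + 1) * ((real n + (\<alpha> + 1)) gchoose (n - i))
     + real i * ((real n + (\<alpha> + 2)) gchoose (Suc n - i))"
proof -
  define m where "m = n - i"
  define X where "X = real n + (\<alpha> + 1)"
  have n: "n = m + i" using assms by (simp add: m_def)
  have "real (Suc n) * (X gchoose Suc m) = real (Suc m) * (X gchoose Suc m) + real i * (X gchoose Suc m)"
    by (simp add: n algebra_simps)
  also have "\<dots> = (X - real m) * (X gchoose m) + real i * (X gchoose Suc m)"
    using gbinomial_absorption[of m X] gbinomial_absorb_comp[of X m] by simp
  also have "X - real m = (\<alpha> + 1) + real i"
    by (simp add: X_def n)
  also have "((\<alpha> + 1) + real i) * (X gchoose m) + real i * (X gchoose Suc m) =
     (\<alpha> + 1) * (X gchoose m) + real i * ((X + 1) gchoose Suc m)"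
    using gbinomial_Suc_Suc[of X m] by (simp add: algebra_simps)
  finally show ?thesis
    using assms by (simp add: X_def m_def Suc_diff_le add_ac)
qed

lemma laguerre_neg_Suc:
  "real (Suc n) * laguerre_neg \<alpha> (Suc n) s
     = (\<alpha> + 1) * laguerre_neg (\<alpha> + 1) n s + s * laguerre_neg (\<alpha> + 2) n s"
proof -
  let ?b = "\<lambda>i. (real n + (\<alpha> + 2)) gchoose (Suc n - i)"
  have shifted: "(\<Sum>i=0..n. s^i / fact i * real i * ?b i) + s^Suc n / fact (Suc n) * real (Suc n)
     = s * laguerre_neg (\<alpha> + 2) n s"
  proof -
    have "(\<Sum>i=0..n. s^i / fact i * real i * ?b i) + s^Suc n / fact (Suc n) * real (Suc n)
       = (\<Sum>i=0..Suc n. s^i / fact i * real i * ?b i)"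
      by (simp only: sum.atLeast0_atMost_Suc diff_self_eq_0 gbinomial_0 mult_1_right)
    also have "\<dots> = (\<Sum>i=0..n. s^Suc i / fact (Suc i) * real (Suc i) * ?b (Suc i))"
      by (subst sum.atLeast0_atMost_Suc_shift) (simp del: fact_Suc of_nat_Suc)
    also have "\<dots> = s * laguerre_neg (\<alpha> + 2) n s"
      unfolding laguerre_neg_def sum_distrib_left
    proof (rule sum.cong[OF refl])
      fix i
      have "fact (Suc i) = real (Suc i) * (fact i :: real)" by simp
      then show "s^Suc i / fact (Suc i) * real (Suc i) * ?b (Suc i) 
          = s * (s^i / fact i * ((real n + (\<alpha> + 2)) gchoose (n - i)))"
        by (simp del: fact_Suc of_nat_Suc)
    qed
    finally show ?thesis .
  qed
  have "real (Suc n) * laguerre_neg \<alpha> (Suc n) s =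
     (\<Sum>i=0..n. s^i / fact i * (real (Suc n) * ((real (Suc n) + \<alpha>) gchoose (Suc n - i))))
      + s^Suc n / fact (Suc n) * real (Suc n)"
    unfolding laguerre_neg_def sum_distrib_left
    by (simp only: sum.atLeast0_atMost_Suc diff_self_eq_0 gbinomial_0) (simp add: mult_ac)
  also have "(\<Sum>i=0..n. s^i / fact i * (real (Suc n) * ((real (Suc n) + \<alpha>) gchoose (Suc n - i)))) =
     (\<Sum>i=0..n. (\<alpha> + 1) * (s^i / fact i * ((real n + (\<alpha> + 1)) gchoose (n - i)))
                + s^i / fact i * real i * ?b i)"
    by (rule sum.cong[OF refl]) (simp only: gbinomial_Suc_shift_split atLeastAtMost_iff ring_distribs mult_ac)
  also have "\<dots> = (\<alpha> + 1) * laguerre_neg (\<alpha> + 1) n s + (\<Sum>i=0..n. s^i / fact i * real i * ?b i)"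
    unfolding laguerre_neg_def by (simp add: sum.distrib sum_distrib_left)
  finally show ?thesis using shifted by (simp add: add.assoc)
qed

definition laguerre_weight :: "real \<Rightarrow> real \<Rightarrow> nat \<Rightarrow> real" where
  "laguerre_weight \<alpha> s k = exp (-s) * 2 powr (-\<alpha>-1) * 2 powr (- real k) * laguerre_neg \<alpha> k s"

lemma p_basis_eq_laguerre_weight: "p_basis \<alpha> \<eta> k x = laguerre_weight \<alpha> (\<eta> * x / 2) k"
proof -
  have "- \<eta> * x / 2 = - (\<eta> * x / 2)" by simp
  then show ?thesis unfolding p_basis_def laguerre_weight_def by (simp only: laguerre_minus)
qed

lemma laguerre_weight_nonneg: "\<alpha> > -1 \<Longrightarrow> s \<ge> 0 \<Longrightarrow> laguerre_weight \<alpha> s k \<ge> 0"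
  unfolding laguerre_weight_def by (intro mult_nonneg_nonneg laguerre_neg_nonneg) auto

lemma laguerre_weight_Suc:
  "real (Suc k) * laguerre_weight \<alpha> s (Suc k)
     = (\<alpha> + 1) * laguerre_weight (\<alpha> + 1) s k + 2 * s * laguerre_weight (\<alpha> + 2) s k"
proof -
  define c where "c = exp (-s) * 2 powr (-\<alpha>-1) * 2 powr (- real k) / 2"
  have "laguerre_weight \<alpha> s (Suc k) = c * laguerre_neg \<alpha> (Suc k) s"
    and "laguerre_weight (\<alpha> + 1) s k = c * laguerre_neg (\<alpha> + 1) k s"
    and "2 * laguerre_weight (\<alpha> + 2) s k = c * laguerre_neg (\<alpha> + 2) k s"
    unfolding laguerre_weight_def c_def by (simp_all add: powr_diff powr_minus powr_add field_simps)
  then show ?thesis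
    using laguerre_neg_Suc[of k \<alpha> s] by (simp add: algebra_simps)
qed

lemma negative_binomial_half_sums:
  assumes "c > (0::real)"
  shows "(\<lambda>j. (1/2)^j * ((real j + c - 1) gchoose j)) sums (2 powr c)"
proof -
  have "(\<lambda>n. ((-c) gchoose n) * (-1/2)^n) sums (1 + (-1/2)) powr (-c)"
    by (rule gen_binomial_real) simp
  moreover have "((-c) gchoose n) * (-1/2)^n = (1/2)^n * ((real n + c - 1) gchoose n)" for n
  proof -
    have "((-c) gchoose n) * (-1/2)^n = ((-1)^n * (-1/2)^n) * ((c + real n - 1) gchoose n)"
      by (simp add: gbinomial_minus)
    also have "(-1::real)^n * (-1/2)^n = (1/2)^n" by (simp flip: power_mult_distrib)
    finally show ?thesis by (simp add: add_ac)
  qed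
  moreover have "(1 + (-1/2::real)) powr (-c) = 2 powr c"
    by (simp add: powr_minus powr_divide inverse_eq_divide)
  ultimately show ?thesis by simp
qed

lemma laguerre_double_series_has_sum:
  assumes "\<alpha> > -1" "s \<ge> 0"
  shows "((\<lambda>(i, j). s^i / fact i * (1/2)^(i + j) * ((real (i + j) + \<alpha>) gchoose j))
           has_sum (exp s * 2 powr (\<alpha> + 1))) UNIV"
proof -
  define T where "T = (\<lambda>(i, j). s^i / fact i * (1/2::real)^(i + j) * ((real (i + j) + \<alpha>) gchoose j))"
  have T_nonneg: "T (i, j) \<ge> 0" for i j
    unfolding T_def using gbinomial_nonneg_shifted[of \<alpha> i "i + j"] assms
    by (auto intro!: mult_nonneg_nonneg)
  have row: "((\<lambda>j. T (i, j)) has_sum (s^i / fact i * 2 powr (\<alpha> + 1))) UNIV" for i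
  proof -
    have c: "real i + \<alpha> + 1 > 0" using assms by simp
    have "(\<lambda>j. (s^i / fact i * (1/2)^i) * ((1/2)^j * ((real j + (real i + \<alpha> + 1) - 1) gchoose j)))
        sums ((s^i / fact i * (1/2)^i) * 2 powr (real i + \<alpha> + 1))"
      by (rule sums_mult[OF negative_binomial_half_sums[OF c]])
    moreover have "(1/2::real)^i * 2 powr (real i + \<alpha> + 1) = 2 powr (\<alpha> + 1)"
      by (simp add: powr_add powr_realpow power_one_over)
    ultimately have "(\<lambda>j. T (i, j)) sums (s^i / fact i * 2 powr (\<alpha> + 1))"
      unfolding T_def by (simp add: power_add add_ac mult_ac)
    then show ?thesis by (rule sums_nonneg_imp_has_sum) (rule T_nonneg)
  qed
  have column: "((\<lambda>i. s^i / fact i * 2 powr (\<alpha> + 1)) has_sum (exp s * 2 powr (\<alpha> + 1))) UNIV"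
  proof (rule sums_nonneg_imp_has_sum)
    have "(\<lambda>i. s^i / fact i) sums exp s"
      using exp_converges[of s] by (simp add: field_simps)
    then show "(\<lambda>i. s^i / fact i * 2 powr (\<alpha> + 1)) sums (exp s * 2 powr (\<alpha> + 1))"
      by (rule sums_mult2)
  qed (use assms in auto)
  have "T summable_on Sigma UNIV (\<lambda>_. UNIV)"
    by (rule summable_on_SigmaI[OF row has_sum_imp_summable[OF column]]) (use T_nonneg in auto)
  from has_sum_SigmaI[OF row column this] show ?thesis
    by (simp add: T_def)
qed

text \<open>The generating function \<open>\<Sum>\<^sub>k L\<^sub>k\<^sup>(\<^sup>\<alpha>\<^sup>)(t) w\<^sup>k = (1 - w)\<^sup>-\<^sup>\<alpha>\<^sup>-\<^sup>1 exp (- t w / (1 - w))\<close>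
  at \<open>w = 1/2\<close>, \<open>t = -s\<close>, obtained by summing the double series along diagonals.\<close>
lemma laguerre_neg_generating_half:
  assumes "\<alpha> > -1" "s \<ge> 0"
  shows "(\<lambda>k. 2 powr (- real k) * laguerre_neg \<alpha> k s) sums (exp s * 2 powr (\<alpha> + 1))"
proof -
  define T where "T = (\<lambda>(i, j). s^i / fact i * (1/2::real)^(i + j) * ((real (i + j) + \<alpha>) gchoose j))"
  define h where "h = (\<lambda>(k::nat, i::nat). (i, k - i))"
  have bij: "bij_betw h (Sigma UNIV (\<lambda>k. {0..k})) UNIV"
    by (rule bij_betwI[of _ _ _ "\<lambda>(i, j). (i + j, i)"]) (auto simp: h_def)
  have "((\<lambda>p. T (h p)) has_sum (exp s * 2 powr (\<alpha> + 1))) (Sigma UNIV (\<lambda>k. {0..k}))"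
    using has_sum_reindex_bij_betw[OF bij, of T] laguerre_double_series_has_sum[OF assms]
    by (simp add: T_def)
  then have "((\<lambda>k. \<Sum>i=0..k. T (h (k, i))) has_sum (exp s * 2 powr (\<alpha> + 1))) UNIV"
    by (rule has_sum_Sigma'[where b = "\<lambda>k. \<Sum>i=0..k. T (h (k, i))"]) (auto intro: has_sum_finite)
  moreover have "(\<Sum>i=0..k. T (h (k, i))) = 2 powr (- real k) * laguerre_neg \<alpha> k s" for k
    unfolding laguerre_neg_def sum_distrib_left
  proof (rule sum.cong[OF refl])
    fix i assume "i \<in> {0..k}"
    then have ik: "i + (k - i) = k" "real i + real (k - i) = real k" by auto
    have "(1/2::real)^k = 2 powr (- real k)"
      by (simp add: powr_minus powr_realpow power_one_over inverse_eq_divide)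
    then show "T (h (k, i)) = 2 powr (- real k) * (s^i / fact i * ((real k + \<alpha>) gchoose (k - i)))"
      unfolding T_def h_def by (simp add: ik mult_ac)
  qed
  ultimately show ?thesis by (simp add: has_sum_imp_sums)
qed

lemma laguerre_weight_sums_one:
  assumes "\<alpha> > -1" "s \<ge> 0"
  shows "laguerre_weight \<alpha> s sums 1"
proof -
  have "(\<lambda>k. (exp (-s) * 2 powr (-\<alpha>-1)) * (2 powr (- real k) * laguerre_neg \<alpha> k s)) sums
      ((exp (-s) * 2 powr (-\<alpha>-1)) * (exp s * 2 powr (\<alpha> + 1)))"
    by (rule sums_mult[OF laguerre_neg_generating_half[OF assms]])
  moreover have "(exp (-s) * 2 powr (-\<alpha>-1)) * (exp s * 2 powr (\<alpha> + 1)) = 1"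
    by (simp add: exp_minus field_simps flip: powr_add)
  ultimately show ?thesis unfolding laguerre_weight_def by (simp add: mult_ac)
qed

definition falling_factorial :: "nat \<Rightarrow> nat \<Rightarrow> real" where
  "falling_factorial k m = (\<Prod>i<m. real k - real i)"

lemma falling_factorial_0 [simp]: "falling_factorial k 0 = 1"
  by (simp add: falling_factorial_def)

lemma falling_factorial_Suc: "falling_factorial k (Suc m) = falling_factorial k m * (real k - real m)"
  by (simp add: falling_factorial_def)

lemma falling_factorial_Suc_Suc:
  "falling_factorial (Suc k) (Suc m) = real (Suc k) * falling_factorial k m"
  unfolding falling_factorial_def by (subst prod.lessThan_Suc_shift) simp

lemma falling_factorial_0_Suc: "falling_factorial 0 (Suc m) = 0"
  unfolding falling_factorial_def by (subst prod.lessThan_Suc_shift) simp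

fun weight_factorial_moment :: "real \<Rightarrow> real \<Rightarrow> nat \<Rightarrow> real" where
  "weight_factorial_moment \<alpha> s 0 = 1"
| "weight_factorial_moment \<alpha> s (Suc m) =
     (\<alpha> + 1) * weight_factorial_moment (\<alpha> + 1) s m + 2 * s * weight_factorial_moment (\<alpha> + 2) s m"

lemma laguerre_weight_factorial_moment_sums:
  assumes "\<alpha> > -1" "s \<ge> 0"
  shows "(\<lambda>k. laguerre_weight \<alpha> s k * falling_factorial k m) sums weight_factorial_moment \<alpha> s m"
  using assms(1)
proof (induction m arbitrary: \<alpha>)
  case 0
  then show ?case using laguerre_weight_sums_one[OF 0 assms(2)] by simp
next
  case (Suc m)
  have "(\<lambda>k. (\<alpha> + 1) * (laguerre_weight (\<alpha> + 1) s k * falling_factorial k m)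
             + 2 * s * (laguerre_weight (\<alpha> + 2) s k * falling_factorial k m))
        sums weight_factorial_moment \<alpha> s (Suc m)"
    using Suc by (auto intro!: sums_add sums_mult)
  moreover have "laguerre_weight \<alpha> s (Suc k) * falling_factorial (Suc k) (Suc m)
      = (\<alpha> + 1) * (laguerre_weight (\<alpha> + 1) s k * falling_factorial k m)
        + 2 * s * (laguerre_weight (\<alpha> + 2) s k * falling_factorial k m)" for k
  proof -
    have "laguerre_weight \<alpha> s (Suc k) * falling_factorial (Suc k) (Suc m)
        = falling_factorial k m * (real (Suc k) * laguerre_weight \<alpha> s (Suc k))"
      by (simp only: falling_factorial_Suc_Suc mult_ac)
    then show ?thesis by (simp only: laguerre_weight_Suc) (simp add: algebra_simps)
  qed
  ultimately have "(\<lambda>k. laguerre_weight \<alpha> s (Suc k) * falling_factorial (Suc k) (Suc m))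
      sums weight_factorial_moment \<alpha> s (Suc m)"
    by simp
  then show ?case by (subst (asm) sums_Suc_iff) (simp add: falling_factorial_0_Suc)
qed

text \<open>Coefficients of the rising factorial \<open>pochhammer (k\<beta>) i\<close> in the falling factorials
  \<open>falling_factorial k m\<close>; the recursion comes from
  \<open>falling_factorial k m * k = falling_factorial k (m + 1) + m * falling_factorial k m\<close>.\<close>
fun pochhammer_falling_coeff :: "real \<Rightarrow> nat \<Rightarrow> nat \<Rightarrow> real" where
  "pochhammer_falling_coeff \<beta> 0 m = (if m = 0 then 1 else 0)"
| "pochhammer_falling_coeff \<beta> (Suc i) 0 = real i * pochhammer_falling_coeff \<beta> i 0"
| "pochhammer_falling_coeff \<beta> (Suc i) (Suc m) =
     \<beta> * pochhammer_falling_coeff \<beta> i m + (\<beta> * real (Suc m) + real i) * pochhammer_falling_coeff \<beta> i (Suc m)"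

lemma pochhammer_falling_coeff_eq_0: "i < m \<Longrightarrow> pochhammer_falling_coeff \<beta> i m = 0"
proof (induction i arbitrary: m)
  case (Suc i)
  then obtain m' where "m = Suc m'" "i < m'" by (cases m) auto
  then show ?case using Suc.IH by simp
qed simp

lemma pochhammer_eq_falling_factorial_sum:
  "pochhammer (real k * \<beta>) i = (\<Sum>m\<le>i. pochhammer_falling_coeff \<beta> i m * falling_factorial k m)"
proof (induction i)
  case 0
  then show ?case by simp
next
  case (Suc i)
  let ?c = "pochhammer_falling_coeff \<beta>" and ?f = "falling_factorial k"
  have step: "?f m * (real k * \<beta> + real i) = \<beta> * ?f (Suc m) + (\<beta> * real m + real i) * ?f m" for m
    by (simp add: falling_factorial_Suc algebra_simps)
  have "pochhammer (real k * \<beta>) (Suc i) = (\<Sum>m\<le>i. ?c i m * ?f m) * (real k * \<beta> + real i)"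
    by (simp add: pochhammer_Suc Suc.IH)
  also have "\<dots> = (\<Sum>m\<le>i. ?c i m * (?f m * (real k * \<beta> + real i)))"
    by (simp add: sum_distrib_right mult.assoc)
  also have "\<dots> = (\<Sum>m\<le>i. \<beta> * ?c i m * ?f (Suc m)) + (\<Sum>m\<le>i. (\<beta> * real m + real i) * ?c i m * ?f m)"
    by (simp only: step) (simp add: sum.distrib algebra_simps)
  also have "(\<Sum>m\<le>i. (\<beta> * real m + real i) * ?c i m * ?f m)
      = real i * ?c i 0 + (\<Sum>m\<le>i. (\<beta> * real (Suc m) + real i) * ?c i (Suc m) * ?f (Suc m))"
  proof -
    have "(\<Sum>m\<le>i. (\<beta> * real m + real i) * ?c i m * ?f m)
        = (\<Sum>m\<le>Suc i. (\<beta> * real m + real i) * ?c i m * ?f m)"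
      by (simp add: pochhammer_falling_coeff_eq_0)
    then show ?thesis by (simp only: sum.atMost_Suc_shift) simp
  qed
  also have "(\<Sum>m\<le>i. \<beta> * ?c i m * ?f (Suc m)) + (real i * ?c i 0
        + (\<Sum>m\<le>i. (\<beta> * real (Suc m) + real i) * ?c i (Suc m) * ?f (Suc m)))
      = (\<Sum>m\<le>Suc i. ?c (Suc i) m * ?f m)"
    by (simp only: sum.atMost_Suc_shift) (simp add: sum.distrib algebra_simps)
  finally show ?case .
qed

definition weight_pochhammer_moment :: "real \<Rightarrow> real \<Rightarrow> real \<Rightarrow> nat \<Rightarrow> real" where
  "weight_pochhammer_moment \<alpha> \<beta> s i =
     (\<Sum>m\<le>i. pochhammer_falling_coeff \<beta> i m * weight_factorial_moment \<alpha> s m)"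

lemma laguerre_weight_pochhammer_moment_sums:
  assumes "\<alpha> > -1" "s \<ge> 0"
  shows "(\<lambda>k. laguerre_weight \<alpha> s k * pochhammer (real k * \<beta>) i) sums weight_pochhammer_moment \<alpha> \<beta> s i"
proof -
  let ?c = "pochhammer_falling_coeff \<beta> i"
  have "(\<lambda>k. \<Sum>m\<le>i. ?c m * (laguerre_weight \<alpha> s k * falling_factorial k m))
      sums weight_pochhammer_moment \<alpha> \<beta> s i"
    unfolding weight_pochhammer_moment_def
    by (intro sums_sum sums_mult laguerre_weight_factorial_moment_sums[OF assms])
  moreover have "laguerre_weight \<alpha> s k * pochhammer (real k * \<beta>) i
      = (\<Sum>m\<le>i. ?c m * (laguerre_weight \<alpha> s k * falling_factorial k m))" for k
    unfolding pochhammer_eq_falling_factorial_sum sum_distrib_left by (simp add: mult_ac)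
  ultimately show ?thesis by simp
qed

lemma I_kernel_power_rescaled:
  assumes "\<eta> > 0" "\<beta> > 0" "k > 0"
  defines "L \<equiv> \<eta> * \<beta>" and "c \<equiv> real k * \<beta>"
  shows "indicator {0<..} z * (I_kernel \<beta> \<eta> k z * z^m) =
    L / (L^m * Gamma c) * (indicator {0..} (L * z) * (L * z) powr (c + real m - 1) / exp (L * z))"
proof (cases "z > 0")
  case True
  have L: "L > 0" and Lz: "L * z > 0" and \<Gamma>: "Gamma c > 0"
    using assms True by (auto simp: L_def c_def intro!: Gamma_real_pos)
  have "(L * z) powr (c + real m - 1) = (L * z) powr ((c - 1) + real m)"
    by (simp add: algebra_simps)
  also have "\<dots> = (L * z) powr (c - 1) * (L * z)^m"
    using Lz by (simp add: powr_add powr_realpow)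
  finally have "(L * z) powr (c + real m - 1) = (L * z) powr (c - 1) * (L * z)^m" .
  moreover have "I_kernel \<beta> \<eta> k z = L * (L * z) powr (c - 1) / (Gamma c * exp (L * z))"
    unfolding I_kernel_def L_def c_def by (simp add: exp_minus field_simps)
  ultimately show ?thesis
    using True L \<Gamma> by (simp add: power_mult_distrib field_simps)
next
  case False
  then have "L * z \<le> 0"
    using assms by (simp add: L_def mult_nonneg_nonpos)
  then show ?thesis using False by (cases "L * z = 0") auto
qed

lemma nn_integral_Gamma_rescaled:
  fixes L c :: real
  assumes "L > 0" "c > 0"
  shows "(\<integral>\<^sup>+z. ennreal (indicator {0..} (L * z) * (L * z) powr (c - 1) / exp (L * z)) \<partial>lborel)
           = ennreal (Gamma c / L)"
proof -
  define g where "g = (\<lambda>t::real. indicator {0..} t * t powr (c - 1) / exp t)"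
  have "ennreal (Gamma c) = (\<integral>\<^sup>+t. ennreal (g t) \<partial>lborel)"
    unfolding g_def using Gamma_conv_nn_integral_real[of c] assms by simp
  also have "\<dots> = ennreal L * (\<integral>\<^sup>+z. ennreal (g (L * z)) \<partial>lborel)"
    using nn_integral_real_affine[of g L 0] assms by (simp add: g_def)
  finally have "ennreal (1 / L) * ennreal (Gamma c) = (\<integral>\<^sup>+z. ennreal (g (L * z)) \<partial>lborel)"
    using assms by (simp add: mult.assoc[symmetric] ennreal_mult[symmetric])
  then show ?thesis
    using assms Gamma_real_pos[of c] by (simp add: g_def ennreal_mult[symmetric])
qed

lemma I_kernel_moment:
  assumes "\<eta> > 0" "\<beta> > 0" "k > 0"
  shows "set_integrable lborel {0<..} (\<lambda>z. I_kernel \<beta> \<eta> k z * z^m)"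
    and "(LBINT z:{0<..}. I_kernel \<beta> \<eta> k z * z^m) = pochhammer (real k * \<beta>) m / (\<eta> * \<beta>)^m"
proof -
  define L where "L = \<eta> * \<beta>"
  define c where "c = real k * \<beta>"
  define g where "g = (\<lambda>t::real. indicator {0..} t * t powr (c + real m - 1) / exp t)"
  define K where "K = L / (L^m * Gamma c)"
  have L: "L > 0" and c: "c > 0" and K: "K > 0"
    using assms by (auto simp: L_def c_def K_def)
  have g_nonneg: "g t \<ge> 0" for t
    unfolding g_def by (auto simp: indicator_def)
  have rescaled: "(\<lambda>z. indicator {0<..} z *\<^sub>R (I_kernel \<beta> \<eta> k z * z^m)) = (\<lambda>z. K * g (L * z))"
    using I_kernel_power_rescaled[OF assms] by (simp add: K_def g_def L_def c_def)
  have g_meas [measurable]: "g \<in> borel_measurable borel"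
    unfolding g_def by measurable
  have meas: "(\<lambda>z. K * g (L * z)) \<in> borel_measurable lborel"
    by measurable
  have "(\<integral>\<^sup>+z. ennreal (K * g (L * z)) \<partial>lborel) = ennreal K * (\<integral>\<^sup>+z. ennreal (g (L * z)) \<partial>lborel)"
    using K g_nonneg by (simp add: ennreal_mult nn_integral_cmult)
  also have "\<dots> = ennreal K * ennreal (Gamma (c + real m) / L)"
    unfolding g_def using nn_integral_Gamma_rescaled[of L "c + real m"] L c by simp
  also have "\<dots> = ennreal (pochhammer c m / L^m)"
  proof -
    have "c \<notin> \<int>\<^sub>\<le>\<^sub>0" using c nonpos_Ints_nonpos by force
    then have "K * (Gamma (c + real m) / L) = pochhammer c m / L^m"
      using L c by (simp add: K_def pochhammer_Gamma field_simps)
    then show ?thesis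
      using K L c Gamma_real_pos[of "c + real m"] by (simp add: ennreal_mult[symmetric])
  qed
  finally have nn: "(\<integral>\<^sup>+z. ennreal (K * g (L * z)) \<partial>lborel) = ennreal (pochhammer c m / L^m)" .
  show "set_integrable lborel {0<..} (\<lambda>z. I_kernel \<beta> \<eta> k z * z^m)"
    unfolding set_integrable_def rescaled
    by (rule integrableI_nn_integral_finite[OF meas _ nn]) (use K g_nonneg in auto)
  have "(LBINT z:{0<..}. I_kernel \<beta> \<eta> k z * z^m) = enn2real (\<integral>\<^sup>+z. ennreal (K * g (L * z)) \<partial>lborel)"
    unfolding set_lebesgue_integral_def rescaled
    by (rule integral_eq_nn_integral[OF meas]) (use K g_nonneg in auto)
  also have "\<dots> = pochhammer c m / L^m"
    using nn L c by (simp add: pochhammer_pos less_imp_le)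
  finally show "(LBINT z:{0<..}. I_kernel \<beta> \<eta> k z * z^m) = pochhammer (real k * \<beta>) m / (\<eta> * \<beta>)^m"
    by (simp add: L_def c_def)
qed

definition kernel_integral :: "real \<Rightarrow> real \<Rightarrow> (real \<Rightarrow> real) \<Rightarrow> nat \<Rightarrow> real" where
  "kernel_integral \<beta> \<eta> g k = (LBINT z:{0<..}. I_kernel \<beta> \<eta> k z * g z)"

definition R_coeff :: "real \<Rightarrow> real \<Rightarrow> (real \<Rightarrow> real) \<Rightarrow> nat \<Rightarrow> real" where
  "R_coeff \<beta> \<eta> g k = (if k = 0 then g 0 else kernel_integral \<beta> \<eta> g k)"

lemma R_op_sums:
  assumes "summable (\<lambda>k. p_basis \<alpha> \<eta> (Suc k) x * kernel_integral \<beta> \<eta> g (Suc k))"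
  shows "(\<lambda>k. p_basis \<alpha> \<eta> k x * R_coeff \<beta> \<eta> g k) sums R_op \<alpha> \<beta> \<eta> g x"
proof -
  have "(\<lambda>k. p_basis \<alpha> \<eta> (Suc k) x * R_coeff \<beta> \<eta> g (Suc k)) sums
      (\<Sum>k. p_basis \<alpha> \<eta> (Suc k) x * (LBINT z:{0<..}. I_kernel \<beta> \<eta> (Suc k) z * g z))"
    using summable_sums[OF assms] by (simp add: R_coeff_def kernel_integral_def)
  then show ?thesis
    unfolding R_op_def by (subst (asm) sums_Suc_iff) (simp add: R_coeff_def add.commute)
qed

lemma kernel_integral_polynomial:
  assumes "\<eta> > 0" "\<beta> > 0" "k > 0"
  shows "set_integrable lborel {0<..} (\<lambda>z. I_kernel \<beta> \<eta> k z * (\<Sum>i\<le>n. a i * z^i))"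
    and "kernel_integral \<beta> \<eta> (\<lambda>z. \<Sum>i\<le>n. a i * z^i) k
           = (\<Sum>i\<le>n. a i * (pochhammer (real k * \<beta>) i / (\<eta> * \<beta>)^i))"
proof -
  have eq: "(\<lambda>z. indicator {0<..} z *\<^sub>R (I_kernel \<beta> \<eta> k z * (\<Sum>i\<le>n. a i * z^i))) =
       (\<lambda>z. \<Sum>i\<le>n. a i * (indicator {0<..} z *\<^sub>R (I_kernel \<beta> \<eta> k z * z^i)))"
    by (simp add: sum_distrib_left mult_ac)
  have int: "integrable lborel (\<lambda>z. indicator {0<..} z *\<^sub>R (I_kernel \<beta> \<eta> k z * z^i))" for i
    using I_kernel_moment(1)[OF assms, of i] unfolding set_integrable_def .
  then show "set_integrable lborel {0<..} (\<lambda>z. I_kernel \<beta> \<eta> k z * (\<Sum>i\<le>n. a i * z^i))"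
    unfolding set_integrable_def eq by auto
  show "kernel_integral \<beta> \<eta> (\<lambda>z. \<Sum>i\<le>n. a i * z^i) k
      = (\<Sum>i\<le>n. a i * (pochhammer (real k * \<beta>) i / (\<eta> * \<beta>)^i))"
    unfolding kernel_integral_def set_lebesgue_integral_def eq
    using int I_kernel_moment(2)[OF assms] by (simp add: integral_sum set_lebesgue_integral_def)
qed

lemma R_coeff_polynomial:
  assumes "\<eta> > 0" "\<beta> > 0"
  shows "R_coeff \<beta> \<eta> (\<lambda>z. \<Sum>i\<le>n. a i * z^i) k
    = (\<Sum>i\<le>n. a i * (pochhammer (real k * \<beta>) i / (\<eta> * \<beta>)^i))"
proof (cases "k = 0")
  case True
  have "a i * 0^i = a i * (pochhammer 0 i / (\<eta> * \<beta>)^i)" for i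
    by (cases i) (auto simp: pochhammer_0_left)
  then show ?thesis unfolding R_coeff_def using True by simp
next
  case False
  then show ?thesis unfolding R_coeff_def using kernel_integral_polynomial(2)[OF assms] by simp
qed

lemma binomial_power_diff: "(z - x)^j = (\<Sum>i\<le>j. (of_nat (j choose i) * (-x)^(j - i)) * (z::real)^i)"
  using binomial_ring[of z "-x" j] by (simp add: mult_ac)

lemma kernel_central_power_integrable:
  assumes "\<eta> > 0" "\<beta> > 0" "k > 0"
  shows "set_integrable lborel {0<..} (\<lambda>z. I_kernel \<beta> \<eta> k z * (z - x)^j)"
  unfolding binomial_power_diff by (rule kernel_integral_polynomial(1)[OF assms])

definition central_moment :: "real \<Rightarrow> real \<Rightarrow> real \<Rightarrow> real \<Rightarrow> nat \<Rightarrow> real" where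
  "central_moment \<alpha> \<beta> \<eta> x j = (\<Sum>i\<le>j. of_nat (j choose i) * (-x)^(j - i)
     * (weight_pochhammer_moment \<alpha> \<beta> (\<eta> * x / 2) i / (\<eta> * \<beta>)^i))"

lemma central_moment_sums:
  assumes "\<alpha> > -1" "\<beta> > 0" "\<eta> > 0" "x \<ge> 0"
  shows "(\<lambda>k. p_basis \<alpha> \<eta> k x * R_coeff \<beta> \<eta> (\<lambda>z. (z - x)^j) k) sums central_moment \<alpha> \<beta> \<eta> x j"
proof -
  let ?a = "\<lambda>i. of_nat (j choose i) * (-x)^(j - i) :: real"
  have "(\<lambda>k. \<Sum>i\<le>j. ?a i / (\<eta> * \<beta>)^i * (laguerre_weight \<alpha> (\<eta> * x / 2) k * pochhammer (real k * \<beta>) i))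
      sums (\<Sum>i\<le>j. ?a i / (\<eta> * \<beta>)^i * weight_pochhammer_moment \<alpha> \<beta> (\<eta> * x / 2) i)"
    using assms by (intro sums_sum sums_mult laguerre_weight_pochhammer_moment_sums) auto
  moreover have "p_basis \<alpha> \<eta> k x * R_coeff \<beta> \<eta> (\<lambda>z. (z - x)^j) k
      = (\<Sum>i\<le>j. ?a i / (\<eta> * \<beta>)^i * (laguerre_weight \<alpha> (\<eta> * x / 2) k * pochhammer (real k * \<beta>) i))" for k
    unfolding binomial_power_diff R_coeff_polynomial[OF assms(3,2)] p_basis_eq_laguerre_weight
      sum_distrib_left by (rule sum.cong) auto
  ultimately show ?thesis
    unfolding central_moment_def by (simp add: mult_ac)
qed

lemma central_moment_0: "central_moment \<alpha> \<beta> \<eta> x 0 = 1"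
  by (simp add: central_moment_def weight_pochhammer_moment_def)

lemma central_moment_1:
  assumes "\<eta> > 0" "\<beta> > 0"
  shows "\<eta> * central_moment \<alpha> \<beta> \<eta> x 1 = \<alpha> + 1"
  using assms by (simp add: central_moment_def weight_pochhammer_moment_def field_simps)

lemma central_moment_2:
  assumes "\<eta> > 0" "\<beta> > 0"
  shows "\<eta> * central_moment \<alpha> \<beta> \<eta> x 2
    = x * (3 + 1/\<beta>) + (1/\<beta> + 3 + \<alpha>/\<beta> + 4*\<alpha> + \<alpha>^2) / \<eta>"
  using assms by (simp add: central_moment_def weight_pochhammer_moment_def eval_nat_numeral field_simps)

lemma central_moment_4:
  assumes "\<eta> > 0" "\<beta> > 0"
  shows "central_moment \<alpha> \<beta> \<eta> x 4 =
    (3*x^2/\<beta>^2 + 18*x^2/\<beta> + 27*x^2) / \<eta>^2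
  + (6*x/\<beta>^3 + 47*x/\<beta>^2 + 150*x/\<beta> + 181*x + 14*\<alpha>*x/\<beta>^2 + 78*\<alpha>*x/\<beta> + 124*\<alpha>*x
     + 6*\<alpha>^2*x/\<beta> + 18*\<alpha>^2*x) / \<eta>^3
  + (6/\<beta>^3 + 33/\<beta>^2 + 78/\<beta> + 75 + 6*\<alpha>/\<beta>^3 + 44*\<alpha>/\<beta>^2 + 126*\<alpha>/\<beta> + 138*\<alpha>
     + 11*\<alpha>^2/\<beta>^2 + 54*\<alpha>^2/\<beta> + 78*\<alpha>^2 + 6*\<alpha>^3/\<beta> + 16*\<alpha>^3 + \<alpha>^4) / \<eta>^4"
  using assms by (simp add: central_moment_def weight_pochhammer_moment_def eval_nat_numeral field_simps)

lemma I_kernel_nonneg: "\<eta> > 0 \<Longrightarrow> \<beta> > 0 \<Longrightarrow> k > 0 \<Longrightarrow> I_kernel \<beta> \<eta> k z \<ge> 0"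
  unfolding I_kernel_def by (intro divide_nonneg_pos mult_nonneg_nonneg Gamma_real_pos) auto

lemma continuous_on_I_kernel:
  assumes "\<eta> > 0" "\<beta> > 0" "k > 0"
  shows "continuous_on {0<..} (I_kernel \<beta> \<eta> k)"
proof -
  have "Gamma (real k * \<beta>) \<noteq> 0"
    using assms by (intro less_imp_neq[symmetric] Gamma_real_pos) simp
  then show ?thesis
    unfolding I_kernel_def by (intro continuous_intros) (use assms in auto)
qed

lemma kernel_integral_dominated:
  assumes "\<eta> > 0" "\<beta> > 0" "k > 0" "a \<ge> 0" "b \<ge> 0"
    and r_cont: "continuous_on {0<..} r"
    and r_le: "\<And>z. z \<ge> 0 \<Longrightarrow> \<bar>r z\<bar> \<le> a * (z - x)^2 + b * (z - x)^4"
  shows "set_integrable lborel {0<..} (\<lambda>z. I_kernel \<beta> \<eta> k z * r z)"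
    and "\<bar>kernel_integral \<beta> \<eta> r k\<bar>
           \<le> a * kernel_integral \<beta> \<eta> (\<lambda>z. (z - x)^2) k + b * kernel_integral \<beta> \<eta> (\<lambda>z. (z - x)^4) k"
proof -
  let ?I = "I_kernel \<beta> \<eta> k"
  let ?bound = "\<lambda>z. a * (?I z * (z - x)^2) + b * (?I z * (z - x)^4)"
  have bound_int: "set_integrable lborel {0<..} ?bound"
    using kernel_central_power_integrable[OF assms(1-3)]
    by (intro set_integral_add set_integrable_mult_right)
  have pointwise: "\<bar>?I z * r z\<bar> \<le> ?bound z" if "z \<in> {0<..}" for z
  proof -
    have "\<bar>?I z * r z\<bar> = ?I z * \<bar>r z\<bar>"
      using I_kernel_nonneg[OF assms(1-3)] by (simp add: abs_mult)
    also have "\<dots> \<le> ?I z * (a * (z - x)^2 + b * (z - x)^4)"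
      using r_le[of z] that I_kernel_nonneg[OF assms(1-3)] by (intro mult_left_mono) auto
    finally show ?thesis by (simp add: algebra_simps)
  qed
  show int: "set_integrable lborel {0<..} (\<lambda>z. ?I z * r z)"
  proof (rule set_integrable_bound[OF bound_int])
    have "continuous_on {0<..} (\<lambda>z. ?I z * r z)"
      by (intro continuous_intros continuous_on_I_kernel assms r_cont)
    from borel_measurable_continuous_on_indicator[OF _ this]
    show "set_borel_measurable lborel {0<..} (\<lambda>z. ?I z * r z)"
      unfolding set_borel_measurable_def by simp
    show "AE z in lborel. z \<in> {0<..} \<longrightarrow> norm (?I z * r z) \<le> norm (?bound z)"
      using pointwise by (intro AE_I2) (auto intro: order_trans[OF _ abs_ge_self])
  qed
  have "\<bar>kernel_integral \<beta> \<eta> r k\<bar> \<le> (LBINT z:{0<..}. \<bar>?I z * r z\<bar>)"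
    unfolding kernel_integral_def using set_integral_norm_bound[OF int] by simp
  also have "\<dots> \<le> (LBINT z:{0<..}. ?bound z)"
    by (intro set_integral_mono set_integrable_abs int bound_int pointwise)
  also have "\<dots> = a * kernel_integral \<beta> \<eta> (\<lambda>z. (z - x)^2) k + b * kernel_integral \<beta> \<eta> (\<lambda>z. (z - x)^4) k"
    unfolding kernel_integral_def using kernel_central_power_integrable[OF assms(1-3)]
    by simp
  finally show "\<bar>kernel_integral \<beta> \<eta> r k\<bar>
      \<le> a * kernel_integral \<beta> \<eta> (\<lambda>z. (z - x)^2) k + b * kernel_integral \<beta> \<eta> (\<lambda>z. (z - x)^4) k" .
qed

lemma R_coeff_dominated:
  assumes "\<eta> > 0" "\<beta> > 0" "a \<ge> 0" "b \<ge> 0"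
    and "continuous_on {0<..} r"
    and r_le: "\<And>z. z \<ge> 0 \<Longrightarrow> \<bar>r z\<bar> \<le> a * (z - x)^2 + b * (z - x)^4"
  shows "\<bar>R_coeff \<beta> \<eta> r k\<bar> \<le> a * R_coeff \<beta> \<eta> (\<lambda>z. (z - x)^2) k + b * R_coeff \<beta> \<eta> (\<lambda>z. (z - x)^4) k"
proof (cases "k = 0")
  case True
  then show ?thesis using r_le[of 0] by (simp add: R_coeff_def)
next
  case False
  then show ?thesis
    using kernel_integral_dominated(2)[OF assms(1,2) _ assms(3-6)] by (simp add: R_coeff_def)
qed

lemma remainder_series_bound:
  assumes "\<alpha> > -1" "\<beta> > 0" "\<eta> > 0" "x \<ge> 0" "a \<ge> 0" "b \<ge> 0"
    and "continuous_on {0<..} r"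
    and "\<And>z. z \<ge> 0 \<Longrightarrow> \<bar>r z\<bar> \<le> a * (z - x)^2 + b * (z - x)^4"
  shows "summable (\<lambda>k. p_basis \<alpha> \<eta> k x * R_coeff \<beta> \<eta> r k)"
    and "\<bar>\<Sum>k. p_basis \<alpha> \<eta> k x * R_coeff \<beta> \<eta> r k\<bar>
           \<le> a * central_moment \<alpha> \<beta> \<eta> x 2 + b * central_moment \<alpha> \<beta> \<eta> x 4"
proof -
  let ?p = "\<lambda>k. p_basis \<alpha> \<eta> k x"
  define g where "g = (\<lambda>k. a * (?p k * R_coeff \<beta> \<eta> (\<lambda>z. (z - x)^2) k)
                          + b * (?p k * R_coeff \<beta> \<eta> (\<lambda>z. (z - x)^4) k))"
  have g_sums: "g sums (a * central_moment \<alpha> \<beta> \<eta> x 2 + b * central_moment \<alpha> \<beta> \<eta> x 4)"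
    unfolding g_def using assms(1-4) by (intro sums_add sums_mult central_moment_sums)
  have le_g: "norm (?p k * R_coeff \<beta> \<eta> r k) \<le> g k" for k
  proof -
    have p_nonneg: "?p k \<ge> 0"
      unfolding p_basis_eq_laguerre_weight using assms by (intro laguerre_weight_nonneg) auto
    then have "norm (?p k * R_coeff \<beta> \<eta> r k) = ?p k * \<bar>R_coeff \<beta> \<eta> r k\<bar>"
      by (simp add: abs_mult)
    also have "\<dots> \<le> ?p k * (a * R_coeff \<beta> \<eta> (\<lambda>z. (z - x)^2) k + b * R_coeff \<beta> \<eta> (\<lambda>z. (z - x)^4) k)"
      using R_coeff_dominated[OF assms(3,2,5-8)] p_nonneg by (rule mult_left_mono)
    finally show ?thesis by (simp add: g_def algebra_simps)
  qed
  show summable: "summable (\<lambda>k. ?p k * R_coeff \<beta> \<eta> r k)"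
    by (rule summable_comparison_test[OF _ sums_summable[OF g_sums]]) (use le_g in auto)
  have "norm (\<Sum>k. ?p k * R_coeff \<beta> \<eta> r k) \<le> (\<Sum>k. g k)"
    by (rule norm_suminf_le[OF le_g sums_summable[OF g_sums]])
  then show "\<bar>\<Sum>k. ?p k * R_coeff \<beta> \<eta> r k\<bar>
      \<le> a * central_moment \<alpha> \<beta> \<eta> x 2 + b * central_moment \<alpha> \<beta> \<eta> x 4"
    using sums_unique[OF g_sums] by simp
qed

lemma R_op_quadratic_expansion:
  assumes "\<alpha> > -1" "\<beta> > 0" "\<eta> > 0" "x \<ge> 0" "a \<ge> 0" "b \<ge> 0"
    and \<Phi>_eq: "\<And>z. \<Phi> z = c0 + c1 * (z - x) + c2 * (z - x)^2 + r z"
    and r_cont: "continuous_on {0<..} r"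
    and r_le: "\<And>z. z \<ge> 0 \<Longrightarrow> \<bar>r z\<bar> \<le> a * (z - x)^2 + b * (z - x)^4"
  shows "R_op \<alpha> \<beta> \<eta> \<Phi> x = c0 + c1 * central_moment \<alpha> \<beta> \<eta> x 1 + c2 * central_moment \<alpha> \<beta> \<eta> x 2
           + (\<Sum>k. p_basis \<alpha> \<eta> k x * R_coeff \<beta> \<eta> r k)"
proof -
  let ?p = "\<lambda>k. p_basis \<alpha> \<eta> k x" and ?e = "\<lambda>j z. (z - x) ^ j"
  have coeff: "R_coeff \<beta> \<eta> \<Phi> k = c0 * R_coeff \<beta> \<eta> (?e 0) k + c1 * R_coeff \<beta> \<eta> (?e 1) k
      + c2 * R_coeff \<beta> \<eta> (?e 2) k + R_coeff \<beta> \<eta> r k" for k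
  proof (cases "k = 0")
    case True
    then show ?thesis by (simp add: R_coeff_def \<Phi>_eq)
  next
    case False
    have int: "set_integrable lborel {0<..} (\<lambda>z. I_kernel \<beta> \<eta> k z * ?e j z)" for j
      using False by (intro kernel_central_power_integrable assms) auto
    have "set_integrable lborel {0<..} (\<lambda>z. I_kernel \<beta> \<eta> k z * r z)"
      using False by (intro kernel_integral_dominated(1)[OF assms(3,2) _ assms(5,6) r_cont r_le]) auto
    moreover have "(\<lambda>z. I_kernel \<beta> \<eta> k z * \<Phi> z) = (\<lambda>z. c0 * (I_kernel \<beta> \<eta> k z * ?e 0 z)
        + c1 * (I_kernel \<beta> \<eta> k z * ?e 1 z) + c2 * (I_kernel \<beta> \<eta> k z * ?e 2 z) + I_kernel \<beta> \<eta> k z * r z)"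
      by (simp add: \<Phi>_eq algebra_simps)
    ultimately show ?thesis
      using int[of 0] int[of 1] int[of 2] False unfolding R_coeff_def kernel_integral_def
      by (simp add: set_integral_mult_right del: power_0 power_one_right)
  qed
  have "(\<lambda>k. c0 * (?p k * R_coeff \<beta> \<eta> (?e 0) k) + c1 * (?p k * R_coeff \<beta> \<eta> (?e 1) k)
      + c2 * (?p k * R_coeff \<beta> \<eta> (?e 2) k) + ?p k * R_coeff \<beta> \<eta> r k) sums
      (c0 * central_moment \<alpha> \<beta> \<eta> x 0 + c1 * central_moment \<alpha> \<beta> \<eta> x 1
        + c2 * central_moment \<alpha> \<beta> \<eta> x 2 + (\<Sum>k. ?p k * R_coeff \<beta> \<eta> r k))"
    using assms(1-4) remainder_series_bound(1)[OF assms(1-6) r_cont r_le]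
    by (intro sums_add sums_mult central_moment_sums summable_sums)
  then have sums: "(\<lambda>k. ?p k * R_coeff \<beta> \<eta> \<Phi> k) sums
      (c0 + c1 * central_moment \<alpha> \<beta> \<eta> x 1 + c2 * central_moment \<alpha> \<beta> \<eta> x 2
        + (\<Sum>k. ?p k * R_coeff \<beta> \<eta> r k))"
    by (simp add: coeff central_moment_0 algebra_simps)
  then have "summable (\<lambda>k. ?p (Suc k) * kernel_integral \<beta> \<eta> \<Phi> (Suc k))"
    using summable_ignore_initial_segment[OF sums_summable[OF sums], of 1] by (simp add: R_coeff_def)
  from sums_unique2[OF R_op_sums[OF this] sums] show ?thesis .
qed

lemma central_moment_2_tendsto:
  assumes "\<beta> > 0"
  shows "((\<lambda>\<eta>. \<eta> * central_moment \<alpha> \<beta> \<eta> x 2) \<longlongrightarrow> x * (3 + 1/\<beta>)) at_top"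
proof -
  define c where "c = 1/\<beta> + 3 + \<alpha>/\<beta> + 4*\<alpha> + \<alpha>^2"
  have "((\<lambda>\<eta>. x * (3 + 1/\<beta>) + c / \<eta>) \<longlongrightarrow> x * (3 + 1/\<beta>) + 0) at_top"
    by (intro tendsto_intros tendsto_divide_0[OF tendsto_const] filterlim_at_top_imp_at_infinity filterlim_ident)
  moreover have "eventually (\<lambda>\<eta>. x * (3 + 1/\<beta>) + c / \<eta> = \<eta> * central_moment \<alpha> \<beta> \<eta> x 2) at_top"
    using eventually_gt_at_top[of 0] by eventually_elim (simp add: central_moment_2[OF _ assms] c_def)
  ultimately show ?thesis by (simp add: tendsto_cong)
qed

lemma central_moment_4_tendsto:
  assumes "\<beta> > 0"
  shows "((\<lambda>\<eta>. \<eta> * central_moment \<alpha> \<beta> \<eta> x 4) \<longlongrightarrow> 0) at_top"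
proof -
  obtain c2 c3 c4 where M4: "\<And>\<eta>. \<eta> > 0 \<Longrightarrow> central_moment \<alpha> \<beta> \<eta> x 4 = c2 / \<eta>^2 + c3 / \<eta>^3 + c4 / \<eta>^4"
    using central_moment_4[OF _ assms] by blast
  have "((\<lambda>\<eta>::real. c2 / \<eta> + c3 / \<eta>^2 + c4 / \<eta>^3) \<longlongrightarrow> 0 + 0 + 0) at_top"
    by (intro tendsto_add tendsto_divide_0[OF tendsto_const] filterlim_at_top_imp_at_infinity
         filterlim_pow_at_top filterlim_ident) auto
  moreover have "eventually (\<lambda>\<eta>. c2 / \<eta> + c3 / \<eta>^2 + c4 / \<eta>^3 = \<eta> * central_moment \<alpha> \<beta> \<eta> x 4) at_top"
    using eventually_gt_at_top[of 0]
    by eventually_elim (simp add: M4 field_simps power2_eq_square power3_eq_cube power4_eq_xxxx)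
  ultimately show ?thesis by (simp add: tendsto_cong)
qed

lemma R_op_remainder_tendsto:
  assumes "\<alpha> > -1" "\<beta> > 0" "x \<ge> 0"
    and r_cont: "continuous_on {0<..} r"
    and r_small: "\<And>\<epsilon>. \<epsilon> > 0 \<Longrightarrow> \<exists>K\<ge>0. \<forall>z\<ge>0. \<bar>r z\<bar> \<le> \<epsilon> * (z - x)^2 + K * (z - x)^4"
  shows "((\<lambda>\<eta>. \<eta> * (\<Sum>k. p_basis \<alpha> \<eta> k x * R_coeff \<beta> \<eta> r k)) \<longlongrightarrow> 0) at_top"
proof (rule tendstoI)
  fix e :: real assume e: "e > 0"
  define C where "C = x * (3 + 1/\<beta>) + 1"
  have "x * (3 + 1/\<beta>) \<ge> 0"
    using assms by simp
  then have C: "C > 0"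
    by (simp add: C_def)
  define \<epsilon> where "\<epsilon> = e / (2 * C)"
  have \<epsilon>: "\<epsilon> > 0" "\<epsilon> * C = e / 2"
    using e C by (auto simp: \<epsilon>_def)
  obtain K where K: "K \<ge> 0" "\<And>z. z \<ge> 0 \<Longrightarrow> \<bar>r z\<bar> \<le> \<epsilon> * (z - x)^2 + K * (z - x)^4"
    using r_small[OF \<epsilon>(1)] by blast
  have "eventually (\<lambda>\<eta>. \<eta> * central_moment \<alpha> \<beta> \<eta> x 2 < C) at_top"
    by (rule order_tendstoD(2)[OF central_moment_2_tendsto[OF assms(2)]]) (simp add: C_def)
  moreover have "eventually (\<lambda>\<eta>. K * (\<eta> * central_moment \<alpha> \<beta> \<eta> x 4) < e/2) at_top"
    using e by (intro order_tendstoD(2)[OF tendsto_mult_right_zero[OF central_moment_4_tendsto[OF assms(2)]]]) simp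
  ultimately show "eventually (\<lambda>\<eta>. dist (\<eta> * (\<Sum>k. p_basis \<alpha> \<eta> k x * R_coeff \<beta> \<eta> r k)) 0 < e) at_top"
    using eventually_gt_at_top[of 0]
  proof eventually_elim
    case (elim \<eta>)
    let ?E = "\<Sum>k. p_basis \<alpha> \<eta> k x * R_coeff \<beta> \<eta> r k"
    have "\<bar>\<eta> * ?E\<bar> = \<eta> * \<bar>?E\<bar>"
      using elim(3) by (simp add: abs_mult)
    also have "\<dots> \<le> \<eta> * (\<epsilon> * central_moment \<alpha> \<beta> \<eta> x 2 + K * central_moment \<alpha> \<beta> \<eta> x 4)"
      using assms \<epsilon>(1) K elim(3) by (intro mult_left_mono remainder_series_bound(2)) auto
    also have "\<dots> = \<epsilon> * (\<eta> * central_moment \<alpha> \<beta> \<eta> x 2) + K * (\<eta> * central_moment \<alpha> \<beta> \<eta> x 4)"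
      by (simp add: algebra_simps)
    also have "\<dots> < \<epsilon> * C + e / 2"
      using elim(1,2) \<epsilon>(1) by (intro add_less_le_mono mult_strict_left_mono) auto
    finally show ?case using \<epsilon>(2) by simp
  qed
qed

lemma taylor_second_order_bound:
  fixes \<Phi> \<Phi>' \<Phi>'' :: "real \<Rightarrow> real"
  assumes d1: "\<And>t. t \<ge> 0 \<Longrightarrow> (\<Phi> has_real_derivative \<Phi>' t) (at t within {0..})"
    and d2: "\<And>t. t \<ge> 0 \<Longrightarrow> (\<Phi>' has_real_derivative \<Phi>'' t) (at t within {0..})"
    and S: "convex S" "S \<subseteq> {0..}" "x \<in> S" and w: "\<And>t. t \<in> S \<Longrightarrow> \<bar>\<Phi>'' t - \<Phi>'' x\<bar> \<le> w"
    and z: "z \<in> S"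
  shows "\<bar>\<Phi> z - \<Phi> x - \<Phi>' x * (z - x) - \<Phi>'' x / 2 * (z - x)^2\<bar> \<le> w * (z - x)^2"
proof -
  define g1 where "g1 = (\<lambda>t. \<Phi>' t - \<Phi>' x - \<Phi>'' x * (t - x))"
  define g0 where "g0 = (\<lambda>t. \<Phi> t - \<Phi> x - \<Phi>' x * (t - x) - \<Phi>'' x / 2 * (t - x)^2)"
  have g1_deriv: "(g1 has_field_derivative (\<Phi>'' t - \<Phi>'' x)) (at t within T)" if "t \<in> T" "T \<subseteq> S" for t T
  proof -
    have "(\<Phi>' has_field_derivative \<Phi>'' t) (at t within T)"
      by (rule DERIV_subset[OF d2]) (use that S in auto)
    then show ?thesis unfolding g1_def by (auto intro!: derivative_eq_intros)
  qed
  have g0_deriv: "(g0 has_field_derivative g1 t) (at t within T)" if "t \<in> T" "T \<subseteq> S" for t T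
  proof -
    have "(\<Phi> has_field_derivative \<Phi>' t) (at t within T)"
      by (rule DERIV_subset[OF d1]) (use that S in auto)
    then show ?thesis unfolding g0_def g1_def by (auto intro!: derivative_eq_intros simp: field_simps)
  qed
  have g1_bound: "\<bar>g1 t\<bar> \<le> w * \<bar>t - x\<bar>" if "t \<in> S" for t
  proof -
    have "norm (g1 t - g1 x) \<le> w * norm (t - x)"
      by (rule field_differentiable_bound[OF S(1), where f' = "\<lambda>t. \<Phi>'' t - \<Phi>'' x"])
         (use g1_deriv w that S in auto)
    then show ?thesis by (simp add: g1_def)
  qed
  define T where "T = closed_segment x z"
  have T: "convex T" "T \<subseteq> S" "x \<in> T" "z \<in> T"
    using closed_segment_subset[OF S(3) z S(1)] by (auto simp: T_def)
  have g1_bound_segment: "norm (g1 t) \<le> w * \<bar>z - x\<bar>" if "t \<in> T" for t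
  proof -
    have "dist t x \<le> dist x z" using dist_in_closed_segment[of t x z] that by (simp add: T_def)
    then have "\<bar>t - x\<bar> \<le> \<bar>z - x\<bar>" by (simp add: dist_real_def abs_minus_commute)
    moreover have "w \<ge> 0" using w[OF S(3)] by simp
    ultimately show ?thesis using g1_bound[of t] that T(2) by (auto intro: order_trans mult_left_mono)
  qed
  have "norm (g0 z - g0 x) \<le> (w * \<bar>z - x\<bar>) * norm (z - x)"
    by (rule field_differentiable_bound[OF T(1), where f' = g1]) (use g0_deriv g1_bound_segment T in auto)
  then show ?thesis by (simp add: g0_def power2_eq_square abs_mult)
qed

lemma taylor_remainder_small:
  fixes \<Phi> \<Phi>' \<Phi>'' :: "real \<Rightarrow> real"
  assumes d1: "\<And>t. t \<ge> 0 \<Longrightarrow> (\<Phi> has_real_derivative \<Phi>' t) (at t within {0..})"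
    and d2: "\<And>t. t \<ge> 0 \<Longrightarrow> (\<Phi>' has_real_derivative \<Phi>'' t) (at t within {0..})"
    and cont: "continuous_on {0..} \<Phi>''" and bdd: "bounded (\<Phi>'' ` {0..})"
    and "x \<ge> 0" "\<epsilon> > 0"
  shows "\<exists>K\<ge>0. \<forall>z\<ge>0. \<bar>\<Phi> z - \<Phi> x - \<Phi>' x * (z - x) - \<Phi>'' x / 2 * (z - x)^2\<bar>
           \<le> \<epsilon> * (z - x)^2 + K * (z - x)^4"
proof -
  let ?r = "\<lambda>z. \<Phi> z - \<Phi> x - \<Phi>' x * (z - x) - \<Phi>'' x / 2 * (z - x)^2"
  obtain B where B: "\<And>t. t \<ge> 0 \<Longrightarrow> \<bar>\<Phi>'' t\<bar> \<le> B"
    using bdd unfolding bounded_iff by auto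
  obtain \<delta> where \<delta>: "\<delta> > 0" "\<And>t. t \<ge> 0 \<Longrightarrow> \<bar>t - x\<bar> < \<delta> \<Longrightarrow> \<bar>\<Phi>'' t - \<Phi>'' x\<bar> < \<epsilon>"
    using cont \<open>x \<ge> 0\<close> \<open>\<epsilon> > 0\<close> unfolding continuous_on_iff dist_real_def by fastforce
  define K where "K = 2 * B / \<delta>^2"
  have K: "K \<ge> 0"
    using B[of 0] \<delta>(1) by (simp add: K_def)
  have "\<bar>?r z\<bar> \<le> \<epsilon> * (z - x)^2 + K * (z - x)^4" if "z \<ge> 0" for z
  proof (cases "\<bar>z - x\<bar> < \<delta>")
    case True
    have "\<bar>?r z\<bar> \<le> \<epsilon> * (z - x)^2"
    proof (rule taylor_second_order_bound[OF d1 d2, of "{0..} \<inter> ball x \<delta>"])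
      show "convex ({0::real..} \<inter> ball x \<delta>)"
        by (intro convex_Int convex_real_interval convex_ball)
      show "\<bar>\<Phi>'' t - \<Phi>'' x\<bar> \<le> \<epsilon>" if "t \<in> {0..} \<inter> ball x \<delta>" for t
        using \<delta>(2)[of t] that by (auto simp: dist_real_def abs_minus_commute)
    qed (use True \<delta>(1) \<open>x \<ge> 0\<close> \<open>z \<ge> 0\<close> in \<open>auto simp: dist_real_def abs_minus_commute\<close>)
    then show ?thesis using K by (simp add: add_increasing2)
  next
    case False
    have global: "\<bar>?r z\<bar> \<le> 2 * B * (z - x)^2"
    proof (rule taylor_second_order_bound[OF d1 d2 convex_real_interval(1)])
      show "\<bar>\<Phi>'' t - \<Phi>'' x\<bar> \<le> 2 * B" if "t \<in> {0..}" for t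
        using B[of t] B[of x] that \<open>x \<ge> 0\<close> by auto
    qed (use \<open>x \<ge> 0\<close> \<open>z \<ge> 0\<close> in auto)
    have "\<delta>^2 \<le> (z - x)^2"
      using False \<delta>(1) by (metis abs_le_square_iff abs_of_pos not_less)
    then have "(z - x)^2 * \<delta>^2 \<le> (z - x)^2 * (z - x)^2"
      by (intro mult_left_mono) auto
    then have "(z - x)^2 \<le> (z - x)^4 / \<delta>^2"
      using \<delta>(1) by (simp add: field_simps power4_eq_xxxx power2_eq_square)
    then have "2 * B * (z - x)^2 \<le> 2 * B * ((z - x)^4 / \<delta>^2)"
      using B[of 0] by (intro mult_left_mono) auto
    then have "2 * B * (z - x)^2 \<le> K * (z - x)^4"
      by (simp add: K_def)
    then show ?thesis
      using global \<open>\<epsilon> > 0\<close> by (simp add: add_increasing)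
  qed
  then show ?thesis using K by blast
qed

theorem mainTheorem6:
  fixes \<alpha> \<beta> :: real and \<Phi> \<Phi>' \<Phi>'' :: "real \<Rightarrow> real" and x :: real
  assumes "\<alpha> > -1" and "\<beta> > 0"
    and "\<And>t. t \<ge> 0 \<Longrightarrow> (\<Phi> has_real_derivative \<Phi>' t) (at t within {0..})"
    and "\<And>t. t \<ge> 0 \<Longrightarrow> (\<Phi>' has_real_derivative \<Phi>'' t) (at t within {0..})"
    and "continuous_on {0..} \<Phi>" and "continuous_on {0..} \<Phi>'" and "continuous_on {0..} \<Phi>''"
    and "bounded (\<Phi> ` {0..})" and "bounded (\<Phi>' ` {0..})" and "bounded (\<Phi>'' ` {0..})"
    and "x \<ge> 0"
  shows "((\<lambda>\<eta>. \<eta> * (R_op \<alpha> \<beta> \<eta> \<Phi> x - \<Phi> x)) \<longlongrightarrow>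
           (1 + \<alpha>) * \<Phi>' x + x * (3 * \<beta> + 1) / (2 * \<beta>) * \<Phi>'' x) at_top"
proof -
  define r where "r z = \<Phi> z - \<Phi> x - \<Phi>' x * (z - x) - \<Phi>'' x / 2 * (z - x)^2" for z
  define E where "E \<eta> = (\<Sum>k. p_basis \<alpha> \<eta> k x * R_coeff \<beta> \<eta> r k)" for \<eta>
  have "continuous_on {0<..} \<Phi>"
    by (rule continuous_on_subset[OF assms(5)]) auto
  then have r_cont: "continuous_on {0<..} r"
    unfolding r_def by (intro continuous_intros)
  have r_small: "\<exists>K\<ge>0. \<forall>z\<ge>0. \<bar>r z\<bar> \<le> \<epsilon> * (z - x)^2 + K * (z - x)^4" if "\<epsilon> > 0" for \<epsilon>
    unfolding r_def using taylor_remainder_small[OF assms(3,4,7,10,11) that] .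
  obtain K where K: "K \<ge> 0" "\<And>z. z \<ge> 0 \<Longrightarrow> \<bar>r z\<bar> \<le> 1 * (z - x)^2 + K * (z - x)^4"
    using r_small[of 1] by auto
  have expansion: "\<eta> * (R_op \<alpha> \<beta> \<eta> \<Phi> x - \<Phi> x)
      = (1 + \<alpha>) * \<Phi>' x + \<Phi>'' x / 2 * (\<eta> * central_moment \<alpha> \<beta> \<eta> x 2) + \<eta> * E \<eta>"
    if "\<eta> > 0" for \<eta>
  proof -
    have "R_op \<alpha> \<beta> \<eta> \<Phi> x = \<Phi> x + \<Phi>' x * central_moment \<alpha> \<beta> \<eta> x 1
        + \<Phi>'' x / 2 * central_moment \<alpha> \<beta> \<eta> x 2 + E \<eta>"
      unfolding E_def using assms(1,2,11) that r_cont K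
      by (intro R_op_quadratic_expansion[where a = 1 and b = K]) (auto simp: r_def)
    then have "\<eta> * (R_op \<alpha> \<beta> \<eta> \<Phi> x - \<Phi> x) = \<Phi>' x * (\<eta> * central_moment \<alpha> \<beta> \<eta> x 1)
        + \<Phi>'' x / 2 * (\<eta> * central_moment \<alpha> \<beta> \<eta> x 2) + \<eta> * E \<eta>"
      by (simp add: algebra_simps)
    then show ?thesis
      using central_moment_1[OF that assms(2)] by (simp add: mult.commute)
  qed
  have eventually_eq: "\<forall>\<^sub>F \<eta> in at_top. (1 + \<alpha>) * \<Phi>' x + \<Phi>'' x / 2 * (\<eta> * central_moment \<alpha> \<beta> \<eta> x 2) + \<eta> * E \<eta>
      = \<eta> * (R_op \<alpha> \<beta> \<eta> \<Phi> x - \<Phi> x)"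
    using eventually_gt_at_top[of 0] by eventually_elim (simp add: expansion)
  have "((\<lambda>\<eta>. (1 + \<alpha>) * \<Phi>' x + \<Phi>'' x / 2 * (\<eta> * central_moment \<alpha> \<beta> \<eta> x 2) + \<eta> * E \<eta>)
      \<longlongrightarrow> (1 + \<alpha>) * \<Phi>' x + \<Phi>'' x / 2 * (x * (3 + 1/\<beta>)) + 0) at_top"
    unfolding E_def using assms(1,2,11) r_cont r_small
    by (intro tendsto_intros central_moment_2_tendsto R_op_remainder_tendsto)
  from Lim_transform_eventually[OF this eventually_eq] show ?thesis
    using assms(2) by (simp add: field_simps)
qed

end
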